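(* Let $\{\mathcal{L}_\gamma\}$ be a family of scale-invariant functions $\mathbb{R}^d\to\mathbb{R}$ ($\mathcal{L}_\gamma(cx)=\mathcal{L}_\gamma(x)$ for all $c>0$, $x\ne0$) indexed by a random data point $\gamma$, $\mathcal{L}=\mathbb{E}\mathcal{L}_\gamma$, and $\lambda>0$. For batch size $B$ and learning rate $\eta$, consider SGD with weight decay $x_{k+1}=x_k-\eta\nabla(\mathcal{L}_{\mathcal{B}_k}(x_k)+\frac\lambda2|x_k|^2)$, where $\mathcal{L}_{\mathcal{B}_k}$ is the average of $\mathcal{L}_\gamma$ over an independent mini-batch $\mathcal{B}_k$ of $B$ samples, so that its gradient-noise covariance $\Sigma^B(x)$ satisfies $\Sigma^B(x)=\kappa\Sigma^{\kappa B}(x)$. Assume the limits $R^{B,\eta}_\infty=\lim_t\mathbb{E}|x_t|^2$, $G^{B,\eta}_\infty=\lim_t\mathbb{E}|\nabla\mathcal{L}(x_t)|^2$, $N^{B,\eta}_\infty=\lim_t\mathbb{E}\,\mathrm{Tr}[\Sigma^B(x_t)]$ exist for the relevant $(B,\eta)$. Then for any $B,\eta,C,\kappa$ such that $$\frac{N_\infty^{\kappa B,\kappa\eta}}{G_\infty^{\kappa B,\kappa\eta}}<\Big(1-\frac1\kappa\Big)\frac{1}{C^2-1}-\frac1\kappa,$$ SGD with batch size $B$ and learning rate $\eta$ does not exhibit $(C,\kappa)$-Linear Scaling Invariance.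
   Context: SGD with batch size $B$ and LR $\eta$ exhibits $(C,\kappa)$-Linear Scaling Invariance if, for a constant $C$ with $0<C<\sqrt\kappa$, $\frac1C\le\frac{R_\infty^{B,\eta}}{R_\infty^{\kappa B,\kappa\eta}},\ \frac{N_\infty^{B,\eta}}{\kappa N_\infty^{\kappa B,\kappa\eta}},\ \frac{G_\infty^{B,\eta}}{G_\infty^{\kappa B,\kappa\eta}}\le C.$ *)

theory Defs
  imports "HOL-Probability.Probability"
begin

(* Gradient of f at x (convention: 0 where f is not differentiable, e.g. at the origin
   for a scale-invariant function). *)
definition grad :: "('a::euclidean_space \<Rightarrow> real) \<Rightarrow> 'a \<Rightarrow> 'a" where
  "grad f x = (if \<exists>g. GDERIV f x :> g then (SOME g. GDERIV f x :> g) else 0)"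

definition scale_invariant :: "('a::real_normed_vector \<Rightarrow> real) \<Rightarrow> bool" where
  "scale_invariant f \<longleftrightarrow> (\<forall>c x. c > 0 \<longrightarrow> x \<noteq> 0 \<longrightarrow> f (c *\<^sub>R x) = f x)"

definition popL :: "'g measure \<Rightarrow> ('g \<Rightarrow> 'a \<Rightarrow> real) \<Rightarrow> 'a \<Rightarrow> real" where
  "popL D \<L> y = (\<integral>\<gamma>. \<L> \<gamma> y \<partial>D)"

definition bloss :: "('g \<Rightarrow> 'a \<Rightarrow> real) \<Rightarrow> nat \<Rightarrow> (nat \<Rightarrow> 'g) \<Rightarrow> 'a \<Rightarrow> real" where
  "bloss \<L> B b y = (\<Sum>j<B. \<L> (b j) y) / real B"

definition batch_measure :: "'g measure \<Rightarrow> nat \<Rightarrow> (nat \<Rightarrow> 'g) measure" where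
  "batch_measure D B = PiM {..<B} (\<lambda>_. D)"

definition noise_tr :: "'g measure \<Rightarrow> ('g \<Rightarrow> 'a::euclidean_space \<Rightarrow> real) \<Rightarrow> nat \<Rightarrow> 'a \<Rightarrow> real" where
  "noise_tr D \<L> B x =
     (\<Sum>i\<in>Basis. \<integral>b. ((grad (bloss \<L> B b) x
          - (\<integral>b'. grad (bloss \<L> B b') x \<partial>batch_measure D B)) \<bullet> i)\<^sup>2 \<partial>batch_measure D B)"

(* underlying sample space: an i.i.d. stream of data points; the k-th mini-batch
   consists of the samples omega (k*B), ..., omega (k*B + B - 1) *)
definition sample_space :: "'g measure \<Rightarrow> (nat \<Rightarrow> 'g) measure" where
  "sample_space D = PiM UNIV (\<lambda>_::nat. D)"

definition kth_batch :: "nat \<Rightarrow> (nat \<Rightarrow> 'g) \<Rightarrow> nat \<Rightarrow> (nat \<Rightarrow> 'g)" where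
  "kth_batch B \<omega> k = (\<lambda>j. \<omega> (k * B + j))"

primrec sgd :: "('g \<Rightarrow> 'a::euclidean_space \<Rightarrow> real) \<Rightarrow> real \<Rightarrow> nat \<Rightarrow> real \<Rightarrow> 'a
                 \<Rightarrow> (nat \<Rightarrow> 'g) \<Rightarrow> nat \<Rightarrow> 'a" where
  "sgd \<L> lam B \<eta> x0 \<omega> 0 = x0"
| "sgd \<L> lam B \<eta> x0 \<omega> (Suc k) =
     sgd \<L> lam B \<eta> x0 \<omega> k
     - \<eta> *\<^sub>R grad (\<lambda>y. bloss \<L> B (kth_batch B \<omega> k) y + lam / 2 * (norm y)\<^sup>2)
                    (sgd \<L> lam B \<eta> x0 \<omega> k)"

definition Rseq where
  "Rseq D \<L> lam B \<eta> x0 t = (\<integral>\<omega>. (norm (sgd \<L> lam B \<eta> x0 \<omega> t))\<^sup>2 \<partial>sample_space D)"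
definition Gseq where
  "Gseq D \<L> lam B \<eta> x0 t =
     (\<integral>\<omega>. (norm (grad (popL D \<L>) (sgd \<L> lam B \<eta> x0 \<omega> t)))\<^sup>2 \<partial>sample_space D)"
definition Nseq where
  "Nseq D \<L> lam B \<eta> x0 t = (\<integral>\<omega>. noise_tr D \<L> B (sgd \<L> lam B \<eta> x0 \<omega> t) \<partial>sample_space D)"

definition R_inf where "R_inf D \<L> lam B \<eta> x0 = lim (Rseq D \<L> lam B \<eta> x0)"
definition G_inf where "G_inf D \<L> lam B \<eta> x0 = lim (Gseq D \<L> lam B \<eta> x0)"
definition N_inf where "N_inf D \<L> lam B \<eta> x0 = lim (Nseq D \<L> lam B \<eta> x0)"

definition limits_exist where
  "limits_exist D \<L> lam B \<eta> x0 \<longleftrightarrow>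
     (\<forall>t. integrable (sample_space D) (\<lambda>\<omega>. (norm (sgd \<L> lam B \<eta> x0 \<omega> t))\<^sup>2)
        \<and> integrable (sample_space D)
             (\<lambda>\<omega>. (norm (grad (popL D \<L>) (sgd \<L> lam B \<eta> x0 \<omega> t)))\<^sup>2)
        \<and> integrable (sample_space D) (\<lambda>\<omega>. noise_tr D \<L> B (sgd \<L> lam B \<eta> x0 \<omega> t)))
   \<and> convergent (Rseq D \<L> lam B \<eta> x0)
   \<and> convergent (Gseq D \<L> lam B \<eta> x0)
   \<and> convergent (Nseq D \<L> lam B \<eta> x0)"

definition LSI where
  "LSI D \<L> lam x0 B \<eta> B' C \<kappa> \<longleftrightarrow>
     0 < C \<and> C < sqrt \<kappa> \<and>
     1 / C \<le> R_inf D \<L> lam B \<eta> x0 / R_inf D \<L> lam B' (\<kappa> * \<eta>) x0 \<and>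
     R_inf D \<L> lam B \<eta> x0 / R_inf D \<L> lam B' (\<kappa> * \<eta>) x0 \<le> C \<and>
     1 / C \<le> N_inf D \<L> lam B \<eta> x0 / (\<kappa> * N_inf D \<L> lam B' (\<kappa> * \<eta>) x0) \<and>
     N_inf D \<L> lam B \<eta> x0 / (\<kappa> * N_inf D \<L> lam B' (\<kappa> * \<eta>) x0) \<le> C \<and>
     1 / C \<le> G_inf D \<L> lam B \<eta> x0 / G_inf D \<L> lam B' (\<kappa> * \<eta>) x0 \<and>
     G_inf D \<L> lam B \<eta> x0 / G_inf D \<L> lam B' (\<kappa> * \<eta>) x0 \<le> C"

end

theory Submission
  imports Defs
begin

(*
  Scale invariance makes every mini-batch gradient orthogonal to the current iterate, so the
  weight-decay step satisfies the exact identity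
    |x_(k+1)|^2 = (1 - eta lam)^2 |x_k|^2 + eta^2 |g_k|^2.
  The k-th batch is independent of x_k, which depends only on the earlier batches; hence
  E |g_k|^2 = E |grad L (x_k)|^2 + E Tr Sigma^B (x_k), and letting k tend to infinity gives the
  stationary equation  R lam (2 - eta lam) = eta (G + N).  Write it for (B, eta) and for
  (kappa B, kappa eta): the LSI bounds on G and N turn the first into
  C R lam (2 - eta lam) <= eta C^2 (G' + kappa N'), the hypothesis on N'/G' says exactly
  C^2 (G' + kappa N') < kappa (G' + N'), and the second equation then yields C R < R',
  contradicting R / R' >= 1 / C.
*)

section \<open>Gradients of scale-invariant functions\<close>

lemma gderiv_unique:
  assumes "GDERIV f x :> a" and "GDERIV f x :> b"
  shows "a = b"
proof -
  have "(\<lambda>h. h \<bullet> a) = (\<lambda>h. h \<bullet> b)"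
    using has_derivative_unique assms unfolding gderiv_def by blast
  then have "(a - b) \<bullet> (a - b) = 0"
    by (metis inner_diff_right right_minus_eq)
  then show ?thesis by simp
qed

lemma grad_eqI: "GDERIV f x :> g \<Longrightarrow> grad f x = g"
  unfolding grad_def by (auto intro: gderiv_unique someI)

lemma grad_eq_0_if_not_gderiv: "\<nexists>g. GDERIV f x :> g \<Longrightarrow> grad f x = 0"
  unfolding grad_def by auto

lemma gderiv_half_sq_norm: "GDERIV (\<lambda>y. lam / 2 * (norm y)\<^sup>2) x :> lam *\<^sub>R x"
  unfolding gderiv_def power2_norm_eq_inner
  by (rule derivative_eq_intros refl | simp add: inner_commute algebra_simps)+

text \<open>Where \<open>f\<close> is not differentiable, neither is the sum, and both gradients take the junk
  value \<open>0\<close>; the identity then needs \<open>lam *\<^sub>R x = 0\<close>, hence the disjunct \<open>x = 0\<close>.\<close>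
lemma grad_add_half_sq_norm:
  assumes "(\<exists>g. GDERIV f x :> g) \<or> x = 0"
  shows "grad (\<lambda>y. f y + lam / 2 * (norm y)\<^sup>2) x = grad f x + lam *\<^sub>R x"
proof (cases "\<exists>g. GDERIV f x :> g")
  case True
  then obtain g where g: "GDERIV f x :> g" by blast
  show ?thesis using grad_eqI[OF GDERIV_add[OF g gderiv_half_sq_norm]] grad_eqI[OF g] by simp
next
  case False
  have "\<nexists>g. GDERIV (\<lambda>y. f y + lam / 2 * (norm y)\<^sup>2) x :> g"
  proof
    assume "\<exists>g. GDERIV (\<lambda>y. f y + lam / 2 * (norm y)\<^sup>2) x :> g"
    then obtain g where "GDERIV (\<lambda>y. f y + lam / 2 * (norm y)\<^sup>2) x :> g" by blast
    from GDERIV_diff[OF this gderiv_half_sq_norm[of lam x]] have "GDERIV f x :> g - lam *\<^sub>R x" by simp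
    with False show False by blast
  qed
  then show ?thesis using False assms by (simp add: grad_eq_0_if_not_gderiv)
qed

lemma scale_invariant_gderiv_orthogonal:
  assumes si: "scale_invariant f" and "x \<noteq> 0" and g: "GDERIV f x :> g"
  shows "x \<bullet> g = 0"
proof -
  have "((\<lambda>s. s *\<^sub>R x) has_derivative (\<lambda>s. s *\<^sub>R x)) (at 1)"
    by (intro derivative_eq_intros) auto
  moreover have "(f has_derivative (\<lambda>h. h \<bullet> g)) (at ((\<lambda>s. s *\<^sub>R x) 1))"
    using g by (simp add: gderiv_def)
  ultimately have "((\<lambda>s. f (s *\<^sub>R x)) has_derivative (\<lambda>s. (s *\<^sub>R x) \<bullet> g)) (at 1)"
    by (rule has_derivative_compose)
  then have "((\<lambda>s. f (s *\<^sub>R x)) has_real_derivative x \<bullet> g) (at 1)"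
    by (rule has_derivative_imp_has_field_derivative) simp
  then have "((\<lambda>s. f x) has_real_derivative x \<bullet> g) (at 1)"
    by (rule has_field_derivative_transform_within_open[of _ _ _ "{0<..}"])
       (use si \<open>x \<noteq> 0\<close> in \<open>auto simp: scale_invariant_def\<close>)
  then show ?thesis
    using DERIV_unique DERIV_const by blast
qed

lemma scale_invariant_grad_orthogonal:
  assumes "scale_invariant f"
  shows "x \<bullet> grad f x = 0"
  using scale_invariant_gderiv_orthogonal[OF assms] grad_eqI grad_eq_0_if_not_gderiv
  by (metis inner_zero_left inner_zero_right)

text \<open>Scale invariance gives \<open>f = (\<lambda>y. f (2 *\<^sub>R y))\<close> on the whole space, so a gradient \<open>g\<close> at the
  origin satisfies \<open>g = 2 g\<close>.\<close>
lemma scale_invariant_grad_0: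
  assumes si: "scale_invariant f"
  shows "grad f 0 = 0"
proof (cases "\<exists>g. GDERIV f 0 :> g")
  case True
  then obtain g where g: "GDERIV f 0 :> g" by blast
  have "((\<lambda>y. 2 *\<^sub>R y) has_derivative (\<lambda>h. 2 *\<^sub>R h)) (at 0)"
    by (intro derivative_eq_intros) auto
  moreover have "(f has_derivative (\<lambda>h. h \<bullet> g)) (at ((\<lambda>y. 2 *\<^sub>R y) 0))"
    using g by (simp add: gderiv_def)
  ultimately have "((\<lambda>y. f (2 *\<^sub>R y)) has_derivative (\<lambda>h. (2 *\<^sub>R h) \<bullet> g)) (at 0)"
    by (rule has_derivative_compose)
  then have "GDERIV (\<lambda>y. f (2 *\<^sub>R y)) 0 :> 2 *\<^sub>R g"
    by (simp add: gderiv_def)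
  moreover have "(\<lambda>y. f (2 *\<^sub>R y)) = f"
  proof
    fix y
    show "f (2 *\<^sub>R y) = f y"
      using si by (cases "y = 0") (simp_all add: scale_invariant_def)
  qed
  ultimately have "2 *\<^sub>R g = g"
    using g gderiv_unique by metis
  then have "(2 - 1) *\<^sub>R g = 0"
    by (simp only: scaleR_diff_left scaleR_one diff_self)
  then show ?thesis using grad_eqI[OF g] by simp
qed (simp add: grad_eq_0_if_not_gderiv)

section \<open>Mini-batch gradients and the weight-decay step\<close>

definition batch_grad :: "('g \<Rightarrow> 'a::euclidean_space \<Rightarrow> real) \<Rightarrow> nat \<Rightarrow> (nat \<Rightarrow> 'g) \<Rightarrow> 'a \<Rightarrow> 'a"
  where "batch_grad L B b x = (1 / real B) *\<^sub>R (\<Sum>j<B. grad (L (b j)) x)"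

lemma scale_invariant_bloss:
  "(\<And>\<gamma>. scale_invariant (L \<gamma>)) \<Longrightarrow> scale_invariant (bloss L B b)"
  unfolding scale_invariant_def bloss_def by simp

lemma batch_grad_0:
  "(\<And>\<gamma>. scale_invariant (L \<gamma>)) \<Longrightarrow> batch_grad L B b 0 = 0"
  unfolding batch_grad_def by (simp add: scale_invariant_grad_0)

lemma gderiv_bloss:
  assumes "\<And>\<gamma>. \<exists>g. GDERIV (L \<gamma>) x :> g"
  shows "GDERIV (bloss L B b) x :> batch_grad L B b x"
proof -
  have "GDERIV (L \<gamma>) x :> grad (L \<gamma>) x" for \<gamma>
    using assms grad_eqI by metis
  then have "((\<lambda>y. \<Sum>j<B. L (b j) y) has_derivative (\<lambda>h. \<Sum>j<B. h \<bullet> grad (L (b j)) x)) (at x)"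
    by (intro has_derivative_sum) (simp add: gderiv_def)
  then have "((\<lambda>y. (1 / real B) * (\<Sum>j<B. L (b j) y)) has_derivative
      (\<lambda>h. (1 / real B) * (\<Sum>j<B. h \<bullet> grad (L (b j)) x))) (at x)"
    by (rule has_derivative_mult_right)
  then show ?thesis
    unfolding gderiv_def bloss_def batch_grad_def by (simp add: inner_sum_right)
qed

lemma batch_grad_cong:
  "(\<And>j. j < B \<Longrightarrow> b j = b' j) \<Longrightarrow> batch_grad L B b x = batch_grad L B b' x"
  unfolding batch_grad_def by (auto intro!: sum.cong)

lemma norm_weight_decay_step:
  fixes x g :: "'a::real_inner"
  assumes "x \<bullet> g = 0"
  shows "(norm (x - \<eta> *\<^sub>R (g + lam *\<^sub>R x)))\<^sup>2 = (1 - \<eta> * lam)\<^sup>2 * (norm x)\<^sup>2 + \<eta>\<^sup>2 * (norm g)\<^sup>2"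
proof -
  have "x - \<eta> *\<^sub>R (g + lam *\<^sub>R x) = (1 - \<eta> * lam) *\<^sub>R x - \<eta> *\<^sub>R g"
    by (simp add: algebra_simps)
  moreover have "(norm ((1 - \<eta> * lam) *\<^sub>R x - \<eta> *\<^sub>R g))\<^sup>2
      = (1 - \<eta> * lam)\<^sup>2 * (norm x)\<^sup>2 + \<eta>\<^sup>2 * (norm g)\<^sup>2"
    using assms unfolding power2_norm_eq_inner
    by (simp add: inner_diff_left inner_diff_right inner_commute power2_eq_square algebra_simps)
  ultimately show ?thesis by simp
qed

lemma sgd_depends_on_prefix:
  "(\<And>i. i < k * B \<Longrightarrow> \<omega> i = \<omega>' i) \<Longrightarrow> sgd L lam B \<eta> x0 \<omega> k = sgd L lam B \<eta> x0 \<omega>' k"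
proof (induction k)
  case (Suc k)
  then have "sgd L lam B \<eta> x0 \<omega> k = sgd L lam B \<eta> x0 \<omega>' k"
    by simp
  moreover have "bloss L B (kth_batch B \<omega> k) = bloss L B (kth_batch B \<omega>' k)"
    unfolding bloss_def kth_batch_def using Suc.prems
    by (intro ext arg_cong2[where f="(/)"] sum.cong) auto
  ultimately show ?case by simp
qed simp

locale scale_invariant_family =
  fixes L :: "'g \<Rightarrow> 'a::euclidean_space \<Rightarrow> real"
  assumes scale_inv: "\<And>\<gamma>. scale_invariant (L \<gamma>)"
    and differentiable: "\<And>\<gamma> x. x \<noteq> 0 \<Longrightarrow> \<exists>g. GDERIV (L \<gamma>) x :> g"
begin

lemma grad_bloss: "grad (bloss L B b) x = batch_grad L B b x"
proof (cases "x = 0")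
  case True
  then show ?thesis
    using scale_invariant_grad_0[OF scale_invariant_bloss[of L, OF scale_inv]]
      batch_grad_0[of L, OF scale_inv]
    by simp
next
  case False
  then show ?thesis
    by (intro grad_eqI gderiv_bloss differentiable)
qed

lemma batch_grad_orthogonal: "x \<bullet> batch_grad L B b x = 0"
  using scale_invariant_grad_orthogonal[OF scale_invariant_bloss[of L, OF scale_inv]]
  by (simp add: grad_bloss)

lemma sgd_Suc_batch_grad:
  "sgd L lam B \<eta> x0 \<omega> (Suc k) = sgd L lam B \<eta> x0 \<omega> k
     - \<eta> *\<^sub>R (batch_grad L B (kth_batch B \<omega> k) (sgd L lam B \<eta> x0 \<omega> k)
                 + lam *\<^sub>R sgd L lam B \<eta> x0 \<omega> k)"
proof -
  have "(\<exists>g. GDERIV (bloss L B b) x :> g) \<or> x = 0" for b and x :: 'a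
    using gderiv_bloss[of L x, OF differentiable] by blast
  then have "grad (\<lambda>y. bloss L B (kth_batch B \<omega> k) y + lam / 2 * (norm y)\<^sup>2) (sgd L lam B \<eta> x0 \<omega> k)
      = batch_grad L B (kth_batch B \<omega> k) (sgd L lam B \<eta> x0 \<omega> k)
        + lam *\<^sub>R sgd L lam B \<eta> x0 \<omega> k"
    unfolding grad_bloss[symmetric] by (rule grad_add_half_sq_norm)
  then show ?thesis
    by (simp only: sgd.simps)
qed

lemma norm_sgd_Suc_squared:
  "(norm (sgd L lam B \<eta> x0 \<omega> (Suc k)))\<^sup>2 = (1 - \<eta> * lam)\<^sup>2 * (norm (sgd L lam B \<eta> x0 \<omega> k))\<^sup>2
     + \<eta>\<^sup>2 * (norm (batch_grad L B (kth_batch B \<omega> k) (sgd L lam B \<eta> x0 \<omega> k)))\<^sup>2"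
  unfolding sgd_Suc_batch_grad by (rule norm_weight_decay_step[OF batch_grad_orthogonal])

end

section \<open>Expectations over mini-batches and the sample stream\<close>

lemma norm_mean_squared_le:
  fixes v :: "nat \<Rightarrow> 'a::real_normed_vector"
  shows "(norm ((1 / real n) *\<^sub>R (\<Sum>j<n. v j)))\<^sup>2 \<le> (\<Sum>j<n. (norm (v j))\<^sup>2) / real n"
proof (cases "n = 0")
  case False
  have "(norm (\<Sum>j<n. v j))\<^sup>2 \<le> (\<Sum>j<n. norm (v j))\<^sup>2"
    by (intro power_mono norm_sum) simp
  also have "\<dots> \<le> (\<Sum>j<n. (norm (v j))\<^sup>2) * real n"
    using sum_squared_le_sum_of_squares[of "\<lambda>j. norm (v j)" "{..<n}"] by simp
  finally show ?thesis
    using False by (simp add: power_divide divide_simps power2_eq_square)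
qed simp

lemma sum_Basis_inner_squared: "(\<Sum>i\<in>Basis. (v \<bullet> i)\<^sup>2) = (norm v)\<^sup>2"
  unfolding power2_norm_eq_inner euclidean_inner[of v v] by (simp add: power2_eq_square)

lemma (in prob_space) trace_covariance_eq:
  fixes X :: "'a \<Rightarrow> 'v::euclidean_space"
  assumes X: "integrable M X" and X2: "integrable M (\<lambda>\<omega>. (norm (X \<omega>))\<^sup>2)"
  shows "(\<Sum>i\<in>Basis. \<integral>\<omega>. ((X \<omega> - expectation X) \<bullet> i)\<^sup>2 \<partial>M)
    = expectation (\<lambda>\<omega>. (norm (X \<omega>))\<^sup>2) - (norm (expectation X))\<^sup>2"
proof -
  let ?m = "expectation X"
  have expand: "(norm (v - ?m))\<^sup>2 = (norm v)\<^sup>2 - 2 * (v \<bullet> ?m) + (norm ?m)\<^sup>2" for v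
    unfolding power2_norm_eq_inner by (simp add: inner_diff_left inner_diff_right inner_commute)
  have centred: "integrable M (\<lambda>\<omega>. (norm (X \<omega> - ?m))\<^sup>2)"
    unfolding expand using X X2 by auto
  have "integrable M (\<lambda>\<omega>. ((X \<omega> - ?m) \<bullet> i)\<^sup>2)" if "i \<in> Basis" for i
  proof (rule Bochner_Integration.integrable_bound[OF centred])
    show "(\<lambda>\<omega>. ((X \<omega> - ?m) \<bullet> i)\<^sup>2) \<in> borel_measurable M"
      using borel_measurable_integrable[OF X] by measurable
    have "(v \<bullet> i)\<^sup>2 \<le> (norm v)\<^sup>2" for v :: 'v
      using power_mono[OF Basis_le_norm[OF that, of v] abs_ge_zero, of 2] by simp
    then show "AE \<omega> in M. norm (((X \<omega> - ?m) \<bullet> i)\<^sup>2) \<le> norm ((norm (X \<omega> - ?m))\<^sup>2)"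
      by simp
  qed
  then have "(\<Sum>i\<in>Basis. \<integral>\<omega>. ((X \<omega> - ?m) \<bullet> i)\<^sup>2 \<partial>M)
      = (\<integral>\<omega>. (\<Sum>i\<in>Basis. ((X \<omega> - ?m) \<bullet> i)\<^sup>2) \<partial>M)"
    by (simp add: Bochner_Integration.integral_sum)
  also have "\<dots> = (\<integral>\<omega>. (norm (X \<omega> - ?m))\<^sup>2 \<partial>M)"
    by (simp add: sum_Basis_inner_squared)
  also have "\<dots> = expectation (\<lambda>\<omega>. (norm (X \<omega>))\<^sup>2) - 2 * (?m \<bullet> ?m) + (norm ?m)\<^sup>2"
    unfolding expand using X X2 by (simp add: prob_space inner_commute)
  finally show ?thesis
    by (simp add: power2_norm_eq_inner)
qed

lemma prob_space_batch_measure: "prob_space D \<Longrightarrow> prob_space (batch_measure D B)"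
  unfolding batch_measure_def by (rule prob_space_PiM) simp

lemma measurable_batch_component: "j < B \<Longrightarrow> (\<lambda>b. b j) \<in> measurable (batch_measure D B) D"
  unfolding batch_measure_def by (rule measurable_component_singleton) simp

lemma distr_batch_component:
  "prob_space D \<Longrightarrow> j < B \<Longrightarrow> distr (batch_measure D B) D (\<lambda>b. b j) = D"
  unfolding batch_measure_def by (rule distr_PiM_component) auto

lemma (in sequence_space) nn_integral_prefix:
  assumes g: "g \<in> borel_measurable (\<Pi>\<^sub>M i\<in>{..<n}. M)"
    and prefix: "\<And>\<omega>. g (restrict \<omega> {..<n}) = g \<omega>"
  shows "(\<integral>\<^sup>+\<omega>. g \<omega> \<partial>S) = (\<integral>\<^sup>+b. g b \<partial>(\<Pi>\<^sub>M i\<in>{..<n}. M))"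
proof -
  have "(\<integral>\<^sup>+b. g b \<partial>(\<Pi>\<^sub>M i\<in>{..<n}. M))
      = (\<integral>\<^sup>+b. g b \<partial>distr S (\<Pi>\<^sub>M i\<in>{..<n}. M) (\<lambda>\<omega>. restrict \<omega> {..<n}))"
    by (subst distr_PiM_restrict_finite) auto
  also have "\<dots> = (\<integral>\<^sup>+\<omega>. g (restrict \<omega> {..<n}) \<partial>S)"
    by (rule nn_integral_distr) (auto intro: measurable_restrict_subset g)
  finally show ?thesis
    by (simp add: prefix)
qed

lemma (in sequence_space) nn_integral_shift_independent:
  assumes X: "X \<in> measurable S N"
    and X_prefix: "\<And>\<omega> \<omega>'. (\<And>i. i < n \<Longrightarrow> \<omega> i = \<omega>' i) \<Longrightarrow> X \<omega> = X \<omega>'"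
    and f: "(\<lambda>(x, \<omega>'). f x \<omega>') \<in> borel_measurable (N \<Otimes>\<^sub>M S)"
  shows "(\<integral>\<^sup>+\<omega>. f (X \<omega>) (\<lambda>j. \<omega> (n + j)) \<partial>S) = (\<integral>\<^sup>+\<omega>. \<integral>\<^sup>+\<omega>'. f (X \<omega>) \<omega>' \<partial>S \<partial>S)"
proof -
  let ?h = "\<lambda>\<omega>. f (X \<omega>) (\<lambda>j. \<omega> (n + j))"
  have "(\<lambda>\<omega> j. \<omega> (n + j)) \<in> measurable S S"
    by (rule measurable_PiM_single') (auto simp: space_PiM)
  then have "(\<lambda>\<omega>. (X \<omega>, \<lambda>j. \<omega> (n + j))) \<in> measurable S (N \<Otimes>\<^sub>M S)"
    using X by measurable
  from measurable_compose[OF this f] have h: "?h \<in> borel_measurable S"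
    by simp
  have comb: "?h (comb_seq n \<omega> \<omega>') = f (X \<omega>) \<omega>'" for \<omega> \<omega>'
  proof -
    have "(\<lambda>j. comb_seq n \<omega> \<omega>' (n + j)) = \<omega>'"
      by (rule ext) (metis add.commute comb_seq_add)
    moreover have "X (comb_seq n \<omega> \<omega>') = X \<omega>"
      by (rule X_prefix) (simp add: comb_seq_less)
    ultimately show ?thesis by simp
  qed
  \<comment> \<open>Splicing two independent streams after the first \<open>n\<close> samples of the first one
    yields a stream with the same law.\<close>
  have "(\<integral>\<^sup>+\<omega>. ?h \<omega> \<partial>S)
      = (\<integral>\<^sup>+\<omega>. ?h \<omega> \<partial>distr (S \<Otimes>\<^sub>M S) S (\<lambda>(\<omega>, \<omega>'). comb_seq n \<omega> \<omega>'))"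
    by (simp add: PiM_comb_seq)
  also have "\<dots> = (\<integral>\<^sup>+z. ?h (case z of (\<omega>, \<omega>') \<Rightarrow> comb_seq n \<omega> \<omega>') \<partial>(S \<Otimes>\<^sub>M S))"
    by (rule nn_integral_distr[OF measurable_comb_seq]) (use h in simp)
  also have "\<dots> = (\<integral>\<^sup>+z. f (X (fst z)) (snd z) \<partial>(S \<Otimes>\<^sub>M S))"
    by (simp add: comb split_beta)
  also have "\<dots> = (\<integral>\<^sup>+\<omega>. \<integral>\<^sup>+\<omega>'. f (X \<omega>) \<omega>' \<partial>S \<partial>S)"
    using measurable_compose[OF measurable_Pair[OF measurable_compose[OF measurable_fst X] measurable_snd] f]
    by (subst P.nn_integral_fst[symmetric]) (simp_all add: split_beta)
  finally show ?thesis .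
qed

lemma
  fixes f :: "'g \<Rightarrow> 'b::{banach, second_countable_topology}"
  assumes "prob_space D" and "j < B" and "f \<in> borel_measurable D"
  shows integrable_batch_component_iff:
      "integrable (batch_measure D B) (\<lambda>b. f (b j)) \<longleftrightarrow> integrable D f"
    and integral_batch_component: "(\<integral>b. f (b j) \<partial>batch_measure D B) = (\<integral>\<gamma>. f \<gamma> \<partial>D)"
  using integrable_distr_eq[OF measurable_batch_component[OF \<open>j < B\<close>, of D], of f]
    integral_distr[OF measurable_batch_component[OF \<open>j < B\<close>, of D], of f]
    distr_batch_component[OF assms(1,2)] assms(3)
  by simp_all

lemma measurable_kth_batch: "(\<lambda>\<omega>. kth_batch B \<omega> k j) \<in> measurable (sample_space D) D"
  unfolding kth_batch_def sample_space_def by measurable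

lemma noise_tr_nonneg: "0 \<le> noise_tr D L B x"
  unfolding noise_tr_def by (intro sum_nonneg integral_nonneg) auto

lemma Rseq_nonneg: "0 \<le> Rseq D L lam B \<eta> x0 t"
  unfolding Rseq_def by (simp add: integral_nonneg)

lemma Gseq_nonneg: "0 \<le> Gseq D L lam B \<eta> x0 t"
  unfolding Gseq_def by (simp add: integral_nonneg)

lemma Nseq_nonneg: "0 \<le> Nseq D L lam B \<eta> x0 t"
  unfolding Nseq_def by (simp add: integral_nonneg noise_tr_nonneg)

lemma limits_nonneg:
  assumes "limits_exist D L lam B \<eta> x0"
  shows "0 \<le> R_inf D L lam B \<eta> x0" and "0 \<le> G_inf D L lam B \<eta> x0" and "0 \<le> N_inf D L lam B \<eta> x0"
  using assms unfolding limits_exist_def R_inf_def G_inf_def N_inf_def convergent_LIMSEQ_iff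
  by (auto intro: LIMSEQ_le_const Rseq_nonneg Gseq_nonneg Nseq_nonneg)

section \<open>The stationary equation\<close>

locale scale_invariant_model = scale_invariant_family L
  for L :: "'g \<Rightarrow> 'a::euclidean_space \<Rightarrow> real" +
  fixes D :: "'g measure"
  assumes prob_space_D: "prob_space D"
    and measurable_grad: "(\<lambda>(\<gamma>, x). grad (L \<gamma>) x) \<in> borel_measurable (D \<Otimes>\<^sub>M borel)"
    and square_integrable_grad: "\<And>x. x \<noteq> 0 \<Longrightarrow> integrable D (\<lambda>\<gamma>. (norm (grad (L \<gamma>) x))\<^sup>2)"
    and gderiv_popL: "\<And>x. x \<noteq> 0 \<Longrightarrow> GDERIV (popL D L) x :> (\<integral>\<gamma>. grad (L \<gamma>) x \<partial>D)"
begin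

lemma measurable_batch_grad:
  assumes "\<And>j. j < B \<Longrightarrow> (\<lambda>m. c m j) \<in> measurable M D" and "x \<in> borel_measurable M"
  shows "(\<lambda>m. batch_grad L B (c m) (x m)) \<in> borel_measurable M"
proof -
  have "(\<lambda>m. grad (L (c m j)) (x m)) \<in> borel_measurable M" if "j < B" for j
    using measurable_compose[OF measurable_Pair[OF assms(1)[OF that] assms(2)] measurable_grad]
    by simp
  then show ?thesis
    unfolding batch_grad_def by measurable
qed

lemma measurable_sgd: "(\<lambda>\<omega>. sgd L lam B \<eta> x0 \<omega> k) \<in> borel_measurable (sample_space D)"
proof (induction k)
  case (Suc k)
  then show ?case
    unfolding sgd_Suc_batch_grad
    by (intro borel_measurable_diff borel_measurable_scaleR borel_measurable_add
        borel_measurable_const measurable_batch_grad measurable_kth_batch)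
qed simp

lemma measurable_grad_at: "(\<lambda>\<gamma>. grad (L \<gamma>) x) \<in> borel_measurable D"
  using measurable_compose[OF _ measurable_grad, of "\<lambda>\<gamma>. (\<gamma>, x)"] by simp

lemma integrable_grad: "x \<noteq> 0 \<Longrightarrow> integrable D (\<lambda>\<gamma>. grad (L \<gamma>) x)"
proof -
  interpret prob_space D by (rule prob_space_D)
  assume "x \<noteq> 0"
  then show ?thesis
    using square_integrable_imp_integrable[of "\<lambda>\<gamma>. norm (grad (L \<gamma>) x)"] square_integrable_grad
      measurable_grad_at
    by (simp add: integrable_norm_iff)
qed

lemma grad_popL: "grad (popL D L) x = (\<integral>\<gamma>. grad (L \<gamma>) x \<partial>D)"
proof (cases "x = 0")
  case True
  have "scale_invariant (popL D L)"
    using scale_inv unfolding scale_invariant_def popL_def by simp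
  with True show ?thesis
    by (simp add: scale_invariant_grad_0 scale_invariant_grad_0[OF scale_inv])
qed (simp add: grad_eqI gderiv_popL)

lemma batch_second_moment:
  assumes "B > 0"
  shows "(\<integral>\<^sup>+b. ennreal ((norm (batch_grad L B b x))\<^sup>2) \<partial>batch_measure D B)
    = ennreal ((norm (grad (popL D L) x))\<^sup>2 + noise_tr D L B x)"
proof (cases "x = 0")
  case True
  then show ?thesis
    unfolding noise_tr_def grad_bloss
    by (simp add: batch_grad_0[OF scale_inv] grad_popL scale_invariant_grad_0[OF scale_inv])
next
  case False
  let ?BM = "batch_measure D B" and ?g = "\<lambda>b. batch_grad L B b x"
  interpret BM: prob_space ?BM
    using prob_space_D by (rule prob_space_batch_measure)
  have component: "integrable ?BM (\<lambda>b. grad (L (b j)) x)"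
    "(\<integral>b. grad (L (b j)) x \<partial>?BM) = (\<integral>\<gamma>. grad (L \<gamma>) x \<partial>D)"
    "integrable ?BM (\<lambda>b. (norm (grad (L (b j)) x))\<^sup>2)" if "j < B" for j
    using integrable_batch_component_iff[OF prob_space_D that measurable_grad_at]
      integral_batch_component[OF prob_space_D that measurable_grad_at]
      integrable_batch_component_iff[OF prob_space_D that, of "\<lambda>\<gamma>. (norm (grad (L \<gamma>) x))\<^sup>2"]
      measurable_grad_at integrable_grad[OF False] square_integrable_grad[OF False]
    by auto
  have "integrable ?BM (\<lambda>b. \<Sum>j<B. grad (L (b j)) x)"
    by (intro Bochner_Integration.integrable_sum component) simp
  then have integrable: "integrable ?BM ?g"
    and mean: "BM.expectation ?g = grad (popL D L) x"
    using False \<open>B > 0\<close> unfolding batch_grad_def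
    by (simp_all add: component grad_popL sum_constant_scaleR)
  have dominating: "integrable ?BM (\<lambda>b. (\<Sum>j<B. (norm (grad (L (b j)) x))\<^sup>2) / real B)"
    by (intro integrable_divide Bochner_Integration.integrable_sum component) simp
  have integrable_squared: "integrable ?BM (\<lambda>b. (norm (?g b))\<^sup>2)"
  proof (rule Bochner_Integration.integrable_bound[OF dominating])
    show "(\<lambda>b. (norm (?g b))\<^sup>2) \<in> borel_measurable ?BM"
      using borel_measurable_integrable[OF integrable] by measurable
    show "AE b in ?BM. norm ((norm (?g b))\<^sup>2)
        \<le> norm ((\<Sum>j<B. (norm (grad (L (b j)) x))\<^sup>2) / real B)"
    proof (rule AE_I2)
      fix b
      have "(norm (?g b))\<^sup>2 \<le> (\<Sum>j<B. (norm (grad (L (b j)) x))\<^sup>2) / real B"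
        unfolding batch_grad_def by (rule norm_mean_squared_le)
      then show "norm ((norm (?g b))\<^sup>2) \<le> norm ((\<Sum>j<B. (norm (grad (L (b j)) x))\<^sup>2) / real B)"
        by (simp add: sum_nonneg)
    qed
  qed
  have "noise_tr D L B x = BM.expectation (\<lambda>b. (norm (?g b))\<^sup>2) - (norm (BM.expectation ?g))\<^sup>2"
    unfolding noise_tr_def grad_bloss
    by (rule BM.trace_covariance_eq[OF integrable integrable_squared])
  then show ?thesis
    using integrable_squared mean by (simp add: nn_integral_eq_integral)
qed

lemma expected_batch_grad_squared:
  assumes "B > 0"
  shows "(\<integral>\<^sup>+\<omega>. ennreal ((norm (batch_grad L B (kth_batch B \<omega> t) (sgd L lam B \<eta> x0 \<omega> t)))\<^sup>2)
      \<partial>sample_space D)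
    = (\<integral>\<^sup>+\<omega>. ennreal ((norm (grad (popL D L) (sgd L lam B \<eta> x0 \<omega> t)))\<^sup>2
        + noise_tr D L B (sgd L lam B \<eta> x0 \<omega> t)) \<partial>sample_space D)"
proof -
  interpret sequence_space D
    using prob_space_D
    by (simp add: sequence_space_def product_prob_space_def product_sigma_finite_def
        product_prob_space_axioms_def prob_space_imp_sigma_finite)
  have S: "sample_space D = S"
    by (simp add: sample_space_def)
  let ?f = "\<lambda>x b. ennreal ((norm (batch_grad L B b x))\<^sup>2)"
  have "(\<lambda>(x, b). ?f x b) \<in> borel_measurable (borel \<Otimes>\<^sub>M S)"
    using measurable_batch_grad[of B "\<lambda>z. snd z" "borel \<Otimes>\<^sub>M S" fst] by (simp add: split_beta')
  \<comment> \<open>\<open>x\<^sub>t\<close> depends only on the first \<open>t * B\<close> samples, the \<open>t\<close>-th batch on the next \<open>B\<close>.\<close>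
  then have "(\<integral>\<^sup>+\<omega>. ?f (sgd L lam B \<eta> x0 \<omega> t) (\<lambda>j. \<omega> (t * B + j)) \<partial>S)
      = (\<integral>\<^sup>+\<omega>. \<integral>\<^sup>+b. ?f (sgd L lam B \<eta> x0 \<omega> t) b \<partial>S \<partial>S)"
    using measurable_sgd[of lam B \<eta> x0 t]
    by (intro nn_integral_shift_independent sgd_depends_on_prefix) (simp_all add: S)
  also have "\<dots> = (\<integral>\<^sup>+\<omega>. \<integral>\<^sup>+b. ?f (sgd L lam B \<eta> x0 \<omega> t) b \<partial>batch_measure D B \<partial>S)"
  proof (intro nn_integral_cong)
    fix x
    have "(\<lambda>b. ?f x b) \<in> borel_measurable (batch_measure D B)"
      using measurable_batch_grad[OF measurable_batch_component] by simp
    moreover have "batch_grad L B (restrict b {..<B}) x = batch_grad L B b x" for b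
      by (rule batch_grad_cong) simp
    ultimately show "(\<integral>\<^sup>+b. ?f x b \<partial>S) = (\<integral>\<^sup>+b. ?f x b \<partial>batch_measure D B)"
      unfolding batch_measure_def by (intro nn_integral_prefix) simp_all
  qed
  finally show ?thesis
    by (simp add: S kth_batch_def batch_second_moment[OF \<open>B > 0\<close>])
qed

lemma Rseq_Suc:
  assumes "B > 0" and limits: "limits_exist D L lam B \<eta> x0"
  shows "Rseq D L lam B \<eta> x0 (Suc t) = (1 - \<eta> * lam)\<^sup>2 * Rseq D L lam B \<eta> x0 t
    + \<eta>\<^sup>2 * (Gseq D L lam B \<eta> x0 t + Nseq D L lam B \<eta> x0 t)"
proof -
  let ?x = "sgd L lam B \<eta> x0" and ?S = "sample_space D"
  let ?g = "\<lambda>\<omega>. batch_grad L B (kth_batch B \<omega> t) (?x \<omega> t)"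
  have integrable: "integrable ?S (\<lambda>\<omega>. (norm (?x \<omega> s))\<^sup>2)"
    "integrable ?S (\<lambda>\<omega>. (norm (grad (popL D L) (?x \<omega> t)))\<^sup>2)"
    "integrable ?S (\<lambda>\<omega>. noise_tr D L B (?x \<omega> t))" for s
    using limits unfolding limits_exist_def by blast+
  have next_sq: "ennreal ((norm (?x \<omega> (Suc t)))\<^sup>2)
      = ennreal ((1 - \<eta> * lam)\<^sup>2 * (norm (?x \<omega> t))\<^sup>2) + ennreal (\<eta>\<^sup>2) * ennreal ((norm (?g \<omega>))\<^sup>2)"
    for \<omega>
    using ennreal_plus[of "(1 - \<eta> * lam)\<^sup>2 * (norm (?x \<omega> t))\<^sup>2" "\<eta>\<^sup>2 * (norm (?g \<omega>))\<^sup>2"]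
      ennreal_mult[of "\<eta>\<^sup>2" "(norm (?g \<omega>))\<^sup>2"]
    by (simp add: norm_sgd_Suc_squared del: sgd.simps)
  have "?g \<in> borel_measurable ?S"
    by (intro measurable_batch_grad measurable_kth_batch measurable_sgd)
  have "ennreal (Rseq D L lam B \<eta> x0 (Suc t)) = (\<integral>\<^sup>+\<omega>. ennreal ((norm (?x \<omega> (Suc t)))\<^sup>2) \<partial>?S)"
    unfolding Rseq_def using integrable(1) by (simp add: nn_integral_eq_integral del: sgd.simps)
  also have "\<dots> = (\<integral>\<^sup>+\<omega>. ennreal ((1 - \<eta> * lam)\<^sup>2 * (norm (?x \<omega> t))\<^sup>2) \<partial>?S)
        + ennreal (\<eta>\<^sup>2) * (\<integral>\<^sup>+\<omega>. ennreal ((norm (?g \<omega>))\<^sup>2) \<partial>?S)"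
    using measurable_sgd \<open>?g \<in> borel_measurable ?S\<close> next_sq
    by (simp add: nn_integral_add nn_integral_cmult del: sgd.simps)
  also have "(\<integral>\<^sup>+\<omega>. ennreal ((1 - \<eta> * lam)\<^sup>2 * (norm (?x \<omega> t))\<^sup>2) \<partial>?S)
      = ennreal ((1 - \<eta> * lam)\<^sup>2 * Rseq D L lam B \<eta> x0 t)"
    unfolding Rseq_def by (subst nn_integral_eq_integral) (use integrable(1) in auto)
  also have "(\<integral>\<^sup>+\<omega>. ennreal ((norm (?g \<omega>))\<^sup>2) \<partial>?S)
      = ennreal (Gseq D L lam B \<eta> x0 t + Nseq D L lam B \<eta> x0 t)"
    unfolding expected_batch_grad_squared[OF \<open>B > 0\<close>] Gseq_def Nseq_def
    by (subst nn_integral_eq_integral) (use integrable in \<open>auto intro!: AE_I2 add_nonneg_nonneg noise_tr_nonneg\<close>)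
  finally have "ennreal (Rseq D L lam B \<eta> x0 (Suc t))
      = ennreal ((1 - \<eta> * lam)\<^sup>2 * Rseq D L lam B \<eta> x0 t
        + \<eta>\<^sup>2 * (Gseq D L lam B \<eta> x0 t + Nseq D L lam B \<eta> x0 t))"
    by (simp add: Rseq_nonneg Gseq_nonneg Nseq_nonneg ennreal_plus ennreal_mult)
  moreover have "0 \<le> (1 - \<eta> * lam)\<^sup>2 * Rseq D L lam B \<eta> x0 t
      + \<eta>\<^sup>2 * (Gseq D L lam B \<eta> x0 t + Nseq D L lam B \<eta> x0 t)"
    by (simp add: Rseq_nonneg Gseq_nonneg Nseq_nonneg)
  ultimately show ?thesis
    by (metis ennreal_inj Rseq_nonneg)
qed

lemma stationary_equation:
  assumes "B > 0" and limits: "limits_exist D L lam B \<eta> x0"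
  shows "R_inf D L lam B \<eta> x0 = (1 - \<eta> * lam)\<^sup>2 * R_inf D L lam B \<eta> x0
    + \<eta>\<^sup>2 * (G_inf D L lam B \<eta> x0 + N_inf D L lam B \<eta> x0)"
proof -
  have R: "Rseq D L lam B \<eta> x0 \<longlonglongrightarrow> R_inf D L lam B \<eta> x0"
    and G: "Gseq D L lam B \<eta> x0 \<longlonglongrightarrow> G_inf D L lam B \<eta> x0"
    and N: "Nseq D L lam B \<eta> x0 \<longlonglongrightarrow> N_inf D L lam B \<eta> x0"
    using limits unfolding limits_exist_def R_inf_def G_inf_def N_inf_def
    by (simp_all add: convergent_LIMSEQ_iff)
  have "(\<lambda>t. Rseq D L lam B \<eta> x0 (Suc t)) \<longlonglongrightarrow> R_inf D L lam B \<eta> x0"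
    using R by (rule LIMSEQ_Suc)
  moreover have "(\<lambda>t. Rseq D L lam B \<eta> x0 (Suc t)) \<longlonglongrightarrow> (1 - \<eta> * lam)\<^sup>2 * R_inf D L lam B \<eta> x0
      + \<eta>\<^sup>2 * (G_inf D L lam B \<eta> x0 + N_inf D L lam B \<eta> x0)"
    unfolding Rseq_Suc[OF assms] by (intro tendsto_intros R G N)
  ultimately show ?thesis
    by (rule LIMSEQ_unique)
qed

end

section \<open>Comparing the two stationary equations\<close>

lemma stationary_radius_eq:
  fixes R S \<eta> lam :: real
  assumes "R = (1 - \<eta> * lam)\<^sup>2 * R + \<eta>\<^sup>2 * S" and "\<eta> \<noteq> 0"
  shows "R * lam * (2 - \<eta> * lam) = \<eta> * S"
proof -
  have "\<eta> * (R * lam * (2 - \<eta> * lam)) = \<eta> * (\<eta> * S)"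
    using assms(1) by (simp add: power2_eq_square algebra_simps)
  then show ?thesis
    using assms(2) by simp
qed

lemma noise_ratio_condition:
  fixes C \<kappa> G N :: real
  assumes "0 < C" and "C < sqrt \<kappa>" and "0 < G" and "0 \<le> N"
    and ratio: "N / G < (1 - 1 / \<kappa>) * (1 / (C\<^sup>2 - 1)) - 1 / \<kappa>"
  shows "1 < C\<^sup>2" and "C\<^sup>2 * (G + \<kappa> * N) < \<kappa> * (G + N)"
proof -
  have "C\<^sup>2 < \<kappa>"
    using assms(1,2) by (metis real_sqrt_less_iff real_sqrt_abs abs_of_pos)
  then have "0 < \<kappa>"
    using zero_le_power2[of C] by linarith
  have rhs: "(1 - 1 / \<kappa>) * (1 / (C\<^sup>2 - 1)) - 1 / \<kappa> = (\<kappa> - C\<^sup>2) / (\<kappa> * (C\<^sup>2 - 1))"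
    if "C\<^sup>2 \<noteq> 1"
    using that \<open>0 < \<kappa>\<close> by (simp add: field_simps)
  have "0 \<le> N / G"
    using assms(3,4) by simp
  show C: "1 < C\<^sup>2"
  proof (rule ccontr)
    assume "\<not> 1 < C\<^sup>2"
    \<comment> \<open>For \<open>C\<^sup>2 = 1\<close> the hypothesis reads \<open>N / G < - 1 / \<kappa>\<close>, since \<open>1 / 0 = 0\<close>.\<close>
    then consider "C\<^sup>2 = 1" | "C\<^sup>2 < 1" by linarith
    then have "(1 - 1 / \<kappa>) * (1 / (C\<^sup>2 - 1)) - 1 / \<kappa> < 0"
    proof cases
      case 2
      then have "(\<kappa> - C\<^sup>2) / (\<kappa> * (C\<^sup>2 - 1)) < 0"
        using \<open>C\<^sup>2 < \<kappa>\<close> \<open>0 < \<kappa>\<close> by (intro divide_pos_neg mult_pos_neg) simp_all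
      with 2 show ?thesis
        using rhs by simp
    qed (use \<open>0 < \<kappa>\<close> in simp)
    with ratio \<open>0 \<le> N / G\<close> show False by linarith
  qed
  have "N / G * (\<kappa> * (C\<^sup>2 - 1)) < \<kappa> - C\<^sup>2"
    using ratio rhs C \<open>0 < \<kappa>\<close> by (simp add: pos_less_divide_eq)
  then have "N * (\<kappa> * (C\<^sup>2 - 1)) < (\<kappa> - C\<^sup>2) * G"
    using assms(3) by (simp add: divide_less_eq mult.commute mult.left_commute)
  then show "C\<^sup>2 * (G + \<kappa> * N) < \<kappa> * (G + N)"
    by (simp add: algebra_simps)
qed

lemma stationary_radius_less:
  fixes R R' S S' \<eta> lam C \<kappa> :: real
  assumes "0 < lam" and "0 < \<eta>" and "1 < \<kappa>" and "0 < R'" and "0 < S'"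
    and stationary: "R = (1 - \<eta> * lam)\<^sup>2 * R + \<eta>\<^sup>2 * S"
    and stationary': "R' = (1 - (\<kappa> * \<eta>) * lam)\<^sup>2 * R' + (\<kappa> * \<eta>)\<^sup>2 * S'"
    and less: "C * S < \<kappa> * S'"
  shows "C * R < R'"
proof -
  have eq: "R * lam * (2 - \<eta> * lam) = \<eta> * S"
    using stationary_radius_eq[OF stationary] \<open>0 < \<eta>\<close> by simp
  have eq': "R' * lam * (2 - \<kappa> * \<eta> * lam) = \<kappa> * \<eta> * S'"
    using stationary_radius_eq[OF stationary'] \<open>0 < \<eta>\<close> \<open>1 < \<kappa>\<close> by simp
  have "0 < R' * lam * (2 - \<kappa> * \<eta> * lam)"
    unfolding eq' using \<open>1 < \<kappa>\<close> \<open>0 < \<eta>\<close> \<open>0 < S'\<close> by simp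
  then have "0 < 2 - \<kappa> * \<eta> * lam"
    by (rule zero_less_mult_pos) (simp add: \<open>0 < R'\<close> \<open>0 < lam\<close>)
  have shrink: "2 - \<kappa> * \<eta> * lam < 2 - \<eta> * lam"
    using \<open>1 < \<kappa>\<close> \<open>0 < \<eta>\<close> \<open>0 < lam\<close> by simp
  have "C * R * (lam * (2 - \<eta> * lam)) = \<eta> * (C * S)"
    using eq by (simp add: algebra_simps)
  also have "\<dots> < \<eta> * (\<kappa> * S')"
    using less \<open>0 < \<eta>\<close> by simp
  also have "\<dots> = R' * lam * (2 - \<kappa> * \<eta> * lam)"
    using eq' by simp
  also have "\<dots> < R' * (lam * (2 - \<eta> * lam))"
    using shrink \<open>0 < R'\<close> \<open>0 < lam\<close> by simp
  finally show ?thesis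
    using \<open>0 < 2 - \<kappa> * \<eta> * lam\<close> shrink \<open>0 < lam\<close> by (simp add: mult_less_cancel_right)
qed

lemma stationary_values_not_linearly_scaling:
  fixes R G N R' G' N' \<eta> lam C \<kappa> :: real
  assumes nonneg: "0 \<le> R" "0 \<le> G" "0 \<le> N" "0 \<le> R'" "0 \<le> G'" "0 \<le> N'"
    and "0 < lam" and "0 < \<eta>"
    and stationary: "R = (1 - \<eta> * lam)\<^sup>2 * R + \<eta>\<^sup>2 * (G + N)"
    and stationary': "R' = (1 - (\<kappa> * \<eta>) * lam)\<^sup>2 * R' + (\<kappa> * \<eta>)\<^sup>2 * (G' + N')"
    and ratio: "N' / G' < (1 - 1 / \<kappa>) * (1 / (C\<^sup>2 - 1)) - 1 / \<kappa>"
    and "0 < C" and "C < sqrt \<kappa>"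
    and R_ratio: "1 / C \<le> R / R'"
    and N_ratio: "1 / C \<le> N / (\<kappa> * N')" "N / (\<kappa> * N') \<le> C"
    and G_ratio: "1 / C \<le> G / G'" "G / G' \<le> C"
  shows False
proof -
  have "0 < sqrt \<kappa>"
    using \<open>0 < C\<close> \<open>C < sqrt \<kappa>\<close> by linarith
  then have "0 < \<kappa>"
    by simp
  have denominator_pos: "0 < x" if "1 / C \<le> y / x" and "0 \<le> x" for x y :: real
    using that \<open>0 < C\<close> by (cases "x = 0") auto
  have "0 < R'" "0 < G'" "0 < \<kappa> * N'"
    using R_ratio N_ratio(1) G_ratio(1) nonneg(4-6) \<open>0 < \<kappa>\<close>
    by (auto intro: denominator_pos)
  then have "0 < N'"
    using \<open>0 < \<kappa>\<close> by (simp add: zero_less_mult_iff)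
  have "R' \<le> C * R" and "G + N \<le> C * (G' + \<kappa> * N')"
    using R_ratio G_ratio(2) N_ratio(2) \<open>0 < C\<close> \<open>0 < R'\<close> \<open>0 < G'\<close> \<open>0 < N'\<close> \<open>0 < \<kappa>\<close>
    by (simp_all add: field_simps)
  obtain "1 < C\<^sup>2" and key: "C\<^sup>2 * (G' + \<kappa> * N') < \<kappa> * (G' + N')"
    using noise_ratio_condition[OF \<open>0 < C\<close> \<open>C < sqrt \<kappa>\<close> \<open>0 < G'\<close> nonneg(6) ratio] by blast
  have "1 < \<kappa>"
    using power_strict_mono[OF \<open>C < sqrt \<kappa>\<close>, of 2] \<open>0 < C\<close> \<open>0 < \<kappa>\<close> \<open>1 < C\<^sup>2\<close> by simp
  have "C * (G + N) \<le> C\<^sup>2 * (G' + \<kappa> * N')"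
    using mult_left_mono[OF \<open>G + N \<le> C * (G' + \<kappa> * N')\<close>, of C] \<open>0 < C\<close>
    by (simp add: power2_eq_square)
  with key have "C * R < R'"
    using \<open>0 < G'\<close> \<open>0 < N'\<close>
    by (intro stationary_radius_less[OF \<open>0 < lam\<close> \<open>0 < \<eta>\<close> \<open>1 < \<kappa>\<close> \<open>0 < R'\<close> _ stationary
          stationary']) simp_all
  with \<open>R' \<le> C * R\<close> show False
    by simp
qed

theorem theorem3:
  fixes D :: "'g measure" and \<L> :: "'g \<Rightarrow> 'a::euclidean_space \<Rightarrow> real"
    and lam \<eta> C \<kappa> :: real and B B' :: nat and x0 :: 'a
  assumes D: "prob_space D"
    and scale_inv: "\<And>\<gamma>. scale_invariant (\<L> \<gamma>)"
    and diff: "\<And>\<gamma> x. x \<noteq> 0 \<Longrightarrow> \<exists>g. GDERIV (\<L> \<gamma>) x :> g"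
    and meas: "(\<lambda>(\<gamma>, x). grad (\<L> \<gamma>) x) \<in> borel_measurable (D \<Otimes>\<^sub>M borel)"
    and sq_int: "\<And>x. x \<noteq> 0 \<Longrightarrow> integrable D (\<lambda>\<gamma>. (norm (grad (\<L> \<gamma>) x))\<^sup>2)"
    and grad_L: "\<And>x. x \<noteq> 0 \<Longrightarrow> GDERIV (popL D \<L>) x :> (\<integral>\<gamma>. grad (\<L> \<gamma>) x \<partial>D)"
    and lam: "lam > 0" and eta: "\<eta> > 0" and B: "B > 0" and kappa: "\<kappa> > 0"
    and B': "real B' = \<kappa> * real B"
    and ex1: "limits_exist D \<L> lam B \<eta> x0"
    and ex2: "limits_exist D \<L> lam B' (\<kappa> * \<eta>) x0"
    and hyp: "N_inf D \<L> lam B' (\<kappa> * \<eta>) x0 / G_inf D \<L> lam B' (\<kappa> * \<eta>) x0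
              < (1 - 1 / \<kappa>) * (1 / (C\<^sup>2 - 1)) - 1 / \<kappa>"
  shows "\<not> LSI D \<L> lam x0 B \<eta> B' C \<kappa>"
proof
  assume lsi: "LSI D \<L> lam x0 B \<eta> B' C \<kappa>"
  interpret scale_invariant_model \<L> D
    using D scale_inv diff meas sq_int grad_L
    by (simp add: scale_invariant_model_def scale_invariant_family_def
        scale_invariant_model_axioms_def)
  have "B' > 0"
    using B' kappa B by (metis of_nat_0_less_iff zero_less_mult_iff)
  show False
    by (rule stationary_values_not_linearly_scaling[OF limits_nonneg[OF ex1] limits_nonneg[OF ex2]
          lam eta stationary_equation[OF B ex1] stationary_equation[OF \<open>B' > 0\<close> ex2] hyp])
       (use lsi in \<open>simp_all add: LSI_def\<close>)
qed

end
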